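(* Consider a merge junction with incoming links $I_1=[a_1,b_1]$, $I_2$ and outgoing link $I_3$, with flow capacities $C_1,C_3>0$, and suppose the fundamental diagram of $I_1$ satisfies (F). Fix a split $\eta_1\in(0,1)$, a cycle length $\Delta_A>0$ and the signal control $u_1$ with cycle $\Delta_A$ and split $\eta_1$. Fix data $N_{ini}$ on $[a_1,b_1]$ and $N_{up}$ on $[0,T]$. Assume no spillback, i.e. the supply of $I_3$ is constant, $S_3(t)\equiv C_3$. Let $N^{\Delta_A}$ and $N^0$ be the Lax–Hopf solutions on $I_1$ with data $(N_{ini},N_{up},N^{\Delta_A}_{down})$ and $(N_{ini},N_{up},N^{0}_{down})$ respectively. Then $N^{\Delta_A}(t,x)\to N^0(t,x)$ uniformly on $[0,T]\times[a_1,b_1]$ as $\Delta_A\to0$ (with $\eta_1$, $N_{ini}$, $N_{up}$ fixed).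
   Context: Assumption (F): $f:[0,\rho_j]\to[0,C]$ continuous and concave, $f(0)=f(\rho_j)=0$, $C=\max f$; $v=f'(0+)$, $-w=f'(\rho_j-)$ finite; $f^*(u)=\sup_{\rho\in[0,\rho_j]}\{f(\rho)-u\rho\}$, $u\in[-w,v]$. Lax–Hopf solution on $[a,b]$ with data $(N_{ini},N_{up},N_{down})$: with $\mathcal{C}(0,x)=N_{ini}(x)$, $\mathcal{C}(s,a)=N_{up}(s)$, $\mathcal{C}(s,b)=N_{down}(s)$ (minimum at corners), $\mathcal{C}=+\infty$ elsewhere, set $N(t,x)=\inf_{u\in[-w,v],\tau\ge0}\{\mathcal{C}(t-\tau,x-\tau u)+\tau f^*(u)\}$. Signal control: $u_1:[0,T]\to\{0,1\}$ is $\Delta_A$-periodic and, for some offset $\theta$, $u_1(t)=1$ iff $(t-\theta)\bmod\Delta_A\in[0,\eta_1\Delta_A)$ (green time $\eta_1\Delta_A$ per cycle). Effective supply for $I_1$: $\mathcal{S}_3^1(t)=\min\{C_1,S_3(t)\}$. Downstream data: on-and-off model $N^{\Delta_A}_{down}(t)=\int_0^t\mathcal{S}^1_3(\tau)u_1(\tau)\,d\tau$; continuum model $N^0_{down}(t)=\int_0^t\eta_1\mathcal{S}^1_3(\tau)\,d\tau$. *)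

theory Defs
  imports "HOL-Analysis.Analysis"
begin

definition assumption_F :: "(real \<Rightarrow> real) \<Rightarrow> real \<Rightarrow> real \<Rightarrow> real \<Rightarrow> real \<Rightarrow> bool" where
  "assumption_F f rhoj C v w \<longleftrightarrow>
     0 < rhoj \<and>
     continuous_on {0..rhoj} f \<and>
     concave_on {0..rhoj} f \<and>
     (\<forall>\<rho>\<in>{0..rhoj}. 0 \<le> f \<rho> \<and> f \<rho> \<le> C) \<and>
     (\<exists>\<rho>\<in>{0..rhoj}. f \<rho> = C) \<and>
     f 0 = 0 \<and> f rhoj = 0 \<and>
     (f has_real_derivative v) (at 0 within {0..rhoj}) \<and>
     (f has_real_derivative (- w)) (at rhoj within {0..rhoj})"

definition fstar :: "(real \<Rightarrow> real) \<Rightarrow> real \<Rightarrow> real \<Rightarrow> real" where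
  "fstar f rhoj u = (SUP \<rho>\<in>{0..rhoj}. f \<rho> - u * \<rho>)"

definition value_cond ::
  "(real \<Rightarrow> real) \<Rightarrow> (real \<Rightarrow> real) \<Rightarrow> (real \<Rightarrow> real) \<Rightarrow> real \<Rightarrow> real \<Rightarrow> real \<Rightarrow> real \<Rightarrow> real \<Rightarrow> ereal" where
  "value_cond Nini Nup Ndown a b T s y =
     min (if s = 0 \<and> a \<le> y \<and> y \<le> b then ereal (Nini y) else \<infinity>)
      (min (if y = a \<and> 0 \<le> s \<and> s \<le> T then ereal (Nup s) else \<infinity>)
           (if y = b \<and> 0 \<le> s \<and> s \<le> T then ereal (Ndown s) else \<infinity>))"

definition lax_hopf ::
  "(real \<Rightarrow> real) \<Rightarrow> real \<Rightarrow> real \<Rightarrow> real \<Rightarrow> (real \<Rightarrow> real) \<Rightarrow> (real \<Rightarrow> real) \<Rightarrow> (real \<Rightarrow> real)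
     \<Rightarrow> real \<Rightarrow> real \<Rightarrow> real \<Rightarrow> real \<Rightarrow> real \<Rightarrow> ereal" where
  "lax_hopf f rhoj v w Nini Nup Ndown a b T t x =
     (INF p\<in>{-w..v} \<times> {0..}.
        value_cond Nini Nup Ndown a b T (t - snd p) (x - snd p * fst p)
        + ereal (snd p * fstar f rhoj (fst p)))"

definition signal :: "real \<Rightarrow> real \<Rightarrow> real \<Rightarrow> real \<Rightarrow> real" where
  "signal eta Delta theta t = (if frac ((t - theta) / Delta) < eta then 1 else 0)"

end

theory Submission
  imports Defs
begin

text \<open>With constant effective supply c, the two downstream boundary data differ only through
  the integral of the signal against its average eta: over each full cycle the signal is green
  for exactly eta Delta, so the two cumulative flows never differ by more than c Delta.
  The Lax--Hopf formula is an infimum of the boundary data plus a cost, hence moving the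
  downstream datum by at most e moves the solution by at most e, uniformly in (t, x) and
  without any use of the fundamental diagram or of the other data.\<close>

text \<open>The green time elapsed in [0, y] for a unit cycle that starts with a green phase of
  length eta, i.e. the integral of the indicator of frac s < eta over [0, y].\<close>
definition cumulative_green :: "real \<Rightarrow> real \<Rightarrow> real" where
  "cumulative_green eta y = eta * of_int \<lfloor>y\<rfloor> + min (frac y) eta"

lemma cumulative_green_increment_bounds:
  assumes "0 \<le> eta" "eta \<le> 1" "y \<le> z"
  shows "0 \<le> cumulative_green eta z - cumulative_green eta y"
    and "cumulative_green eta z - cumulative_green eta y \<le> z - y"
proof -
  define k where "k = \<lfloor>z\<rfloor> - \<lfloor>y\<rfloor>"
  have "k \<ge> 0" using assms floor_mono unfolding k_def by auto
  have fy: "0 \<le> frac y" "frac y < 1" and fz: "0 \<le> frac z" "frac z < 1"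
    by (simp_all add: frac_lt_1)
  have diff: "cumulative_green eta z - cumulative_green eta y
      = eta * of_int k + min (frac z) eta - min (frac y) eta"
    unfolding cumulative_green_def k_def by (simp add: algebra_simps)
  have zy: "z - y = of_int k + frac z - frac y"
    unfolding k_def frac_def by simp
  have "0 \<le> cumulative_green eta z - cumulative_green eta y
        \<and> cumulative_green eta z - cumulative_green eta y \<le> z - y"
  proof (cases "k = 0")
    case True
    then have "frac y \<le> frac z" using zy assms by simp
    then show ?thesis using diff zy assms True by (auto simp: min_def)
  next
    case False
    with \<open>k \<ge> 0\<close> have "1 \<le> real_of_int k" by simp
    then have "eta \<le> eta * of_int k" "1 - eta \<le> of_int k - eta * of_int k"
      using assms mult_left_mono[of 1 "real_of_int k" eta] mult_left_mono[of 1 "real_of_int k" "1 - eta"]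
      by (simp_all add: algebra_simps)
    moreover have "frac y - min (frac y) eta \<le> 1 - eta" "0 \<le> min (frac z) eta"
      "min (frac z) eta \<le> frac z" "min (frac y) eta \<le> eta"
      using fy fz assms by (auto simp: min_def)
    ultimately show ?thesis using diff zy by linarith
  qed
  then show "0 \<le> cumulative_green eta z - cumulative_green eta y"
    and "cumulative_green eta z - cumulative_green eta y \<le> z - y" by auto
qed

lemma lipschitz_cumulative_green:
  assumes "0 \<le> eta" "eta \<le> 1"
  shows "1-lipschitz_on UNIV (cumulative_green eta)"
  by (rule lipschitz_on_leI)
     (use cumulative_green_increment_bounds[OF assms] in \<open>auto simp: dist_real_def\<close>)

lemma cumulative_green_minus_linear_bounds:
  assumes "0 \<le> eta" "eta \<le> 1"
  shows "0 \<le> cumulative_green eta y - eta * y" and "cumulative_green eta y - eta * y \<le> 1"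
proof -
  have "cumulative_green eta y - eta * y = min (frac y) eta - eta * frac y"
    unfolding cumulative_green_def frac_def by (simp add: algebra_simps)
  moreover have "eta * frac y \<le> frac y" "eta * frac y \<le> eta" "0 \<le> eta * frac y"
    using assms by (simp_all add: mult_left_le_one_le mult_right_le_one_le frac_lt_1 less_imp_le)
  moreover have "frac y < 1" "0 \<le> frac y" by (simp_all add: frac_lt_1)
  ultimately show "0 \<le> cumulative_green eta y - eta * y" "cumulative_green eta y - eta * y \<le> 1"
    using assms by (cases "frac y \<le> eta"; simp add: min_def; linarith)+
qed

lemma cumulative_green_has_real_derivative:
  assumes "0 \<le> eta" "eta \<le> 1" "frac y \<noteq> 0" "frac y \<noteq> eta"
  shows "(cumulative_green eta has_real_derivative (if frac y < eta then 1 else 0)) (at y)"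
proof -
  define n where "n = real_of_int \<lfloor>y\<rfloor>"
  have floor_eq: "\<lfloor>z\<rfloor> = \<lfloor>y\<rfloor>" if "n < z" "z < n + 1" for z
    using that unfolding n_def by (intro floor_unique) auto
  have green_eq: "cumulative_green eta z = eta * n + min (z - n) eta" if "n < z" "z < n + 1" for z
    using floor_eq[OF that] unfolding cumulative_green_def n_def frac_def by simp
  have fy: "frac y = y - n" unfolding n_def frac_def ..
  have y: "n < y" "y < n + 1"
    using assms(3) frac_lt_1[of y] frac_ge_0[of y] fy by linarith+
  show ?thesis
  proof (cases "frac y < eta")
    case True
    have mem: "y \<in> {n<..<n + eta}" using True y fy by simp
    have eq: "eta * n + (z - n) = cumulative_green eta z" if "z \<in> {n<..<n + eta}" for z
      using that assms green_eq[of z] by simp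
    have deriv: "((\<lambda>z. eta * n + (z - n)) has_real_derivative 1) (at y)"
      by (auto intro!: derivative_eq_intros)
    from has_field_derivative_transform_within_open[OF deriv _ mem eq]
    show ?thesis using True by simp
  next
    case False
    with assms(4) have mem: "y \<in> {n + eta<..<n + 1}" using y fy by simp
    have eq: "eta * n + eta = cumulative_green eta z" if "z \<in> {n + eta<..<n + 1}" for z
      using that assms green_eq[of z] by simp
    have deriv: "((\<lambda>z. eta * n + eta) has_real_derivative 0) (at y)"
      by (auto intro!: derivative_eq_intros)
    from has_field_derivative_transform_within_open[OF deriv _ mem eq]
    show ?thesis using False by simp
  qed
qed

lemma finite_frac_level_set:
  assumes "0 < Delta"
  shows "finite {\<tau>\<in>{a..b}. frac ((\<tau> - th) / Delta) = r}"
proof (rule finite_subset)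
  let ?g = "\<lambda>\<tau>. (\<tau> - th) / Delta"
  show "{\<tau>\<in>{a..b}. frac (?g \<tau>) = r} \<subseteq> (\<lambda>n. th + Delta * (of_int n + r)) ` {\<lfloor>?g a\<rfloor>..\<lfloor>?g b\<rfloor>}"
  proof
    fix \<tau> assume \<tau>: "\<tau> \<in> {\<tau>\<in>{a..b}. frac (?g \<tau>) = r}"
    then have "?g a \<le> ?g \<tau>" "?g \<tau> \<le> ?g b"
      using assms by (auto intro: divide_right_mono)
    then have "\<lfloor>?g \<tau>\<rfloor> \<in> {\<lfloor>?g a\<rfloor>..\<lfloor>?g b\<rfloor>}" by (auto intro: floor_mono)
    moreover have "\<tau> = th + Delta * (of_int \<lfloor>?g \<tau>\<rfloor> + r)"
      using \<tau> assms unfolding frac_def by auto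
    ultimately show "\<tau> \<in> (\<lambda>n. th + Delta * (of_int n + r)) ` {\<lfloor>?g a\<rfloor>..\<lfloor>?g b\<rfloor>}" by blast
  qed
qed simp

lemma signal_has_integral:
  assumes eta: "0 \<le> eta" "eta \<le> 1" and "0 < Delta" "0 \<le> t"
  shows "(signal eta Delta th has_integral
           Delta * cumulative_green eta ((t - th) / Delta) - Delta * cumulative_green eta (- th / Delta)) {0..t}"
proof -
  define g where "g \<tau> = (\<tau> - th) / Delta" for \<tau>
  define Q where "Q \<tau> = Delta * cumulative_green eta (g \<tau>)" for \<tau>
  define S where "S = {\<tau>\<in>{0..t}. frac (g \<tau>) = 0} \<union> {\<tau>\<in>{0..t}. frac (g \<tau>) = eta}"
  have fin: "finite S"
    unfolding S_def g_def using finite_frac_level_set[OF \<open>0 < Delta\<close>] by blast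
  have deriv: "(Q has_vector_derivative signal eta Delta th \<tau>) (at \<tau>)" if "\<tau> \<in> {0<..<t} - S" for \<tau>
  proof -
    have "frac (g \<tau>) \<noteq> 0" "frac (g \<tau>) \<noteq> eta" using that unfolding S_def by auto
    from cumulative_green_has_real_derivative[OF eta this]
    have "((\<lambda>x. cumulative_green eta (g x)) has_real_derivative
            (if frac (g \<tau>) < eta then 1 else 0) * (1 / Delta)) (at \<tau>)"
      by (rule DERIV_chain2) (use \<open>0 < Delta\<close> in \<open>auto simp: g_def intro!: derivative_eq_intros\<close>)
    then have "(Q has_real_derivative Delta * ((if frac (g \<tau>) < eta then 1 else 0) * (1 / Delta))) (at \<tau>)"
      unfolding Q_def by (rule DERIV_cmult)
    then show ?thesis
      using \<open>0 < Delta\<close> by (simp add: signal_def g_def has_real_derivative_iff_has_vector_derivative)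
  qed
  have "continuous_on {0..t} g"
    using \<open>0 < Delta\<close> unfolding g_def by (intro continuous_intros) auto
  with lipschitz_on_continuous_on[OF lipschitz_cumulative_green[OF eta]]
  have "continuous_on {0..t} (\<lambda>\<tau>. cumulative_green eta (g \<tau>))"
    by (rule continuous_on_compose2) simp
  then have "continuous_on {0..t} Q"
    unfolding Q_def by (rule continuous_on_mult_left)
  from fundamental_theorem_of_calculus_interior_strong[OF fin \<open>0 \<le> t\<close> deriv this]
  have "(signal eta Delta th has_integral (Q t - Q 0)) {0..t}"
    by (simp add: fun_eq_iff)
  then show ?thesis unfolding Q_def g_def by simp
qed

lemma integral_signal_deviation:
  assumes eta: "0 \<le> eta" "eta \<le> 1" and "0 < Delta" "0 \<le> c"
  shows "\<bar>integral {0..s} (\<lambda>\<tau>. c * signal eta Delta th \<tau>) - integral {0..s} (\<lambda>\<tau>. eta * c)\<bar> \<le> c * Delta"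
proof (cases "0 \<le> s")
  case False
  then show ?thesis using assms by simp
next
  case True
  define y1 y0 where "y1 = (s - th) / Delta" and "y0 = - th / Delta"
  define dev where "dev y = cumulative_green eta y - eta * y" for y
  have "integral {0..s} (\<lambda>\<tau>. c * signal eta Delta th \<tau>)
      = c * (Delta * cumulative_green eta y1 - Delta * cumulative_green eta y0)"
    unfolding y1_def y0_def
    by (intro integral_unique has_integral_mult_right signal_has_integral eta \<open>0 < Delta\<close> True)
  moreover have "integral {0..s} (\<lambda>\<tau>. eta * c) = c * (eta * Delta * (y1 - y0))"
    using True \<open>0 < Delta\<close> by (simp add: y1_def y0_def field_simps)
  ultimately have "integral {0..s} (\<lambda>\<tau>. c * signal eta Delta th \<tau>) - integral {0..s} (\<lambda>\<tau>. eta * c)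
      = c * Delta * (dev y1 - dev y0)"
    unfolding dev_def by (simp add: algebra_simps)
  moreover have "\<bar>dev y1 - dev y0\<bar> \<le> 1"
    using cumulative_green_minus_linear_bounds[OF eta, of y1] cumulative_green_minus_linear_bounds[OF eta, of y0]
    unfolding dev_def abs_le_iff by linarith
  ultimately show ?thesis
    using assms by (simp add: abs_mult mult_left_le)
qed

lemma value_cond_le_add:
  assumes "\<And>s. Ndown1 s \<le> Ndown2 s + e" "0 \<le> e"
  shows "value_cond Nini Nup Ndown1 a b T s y \<le> value_cond Nini Nup Ndown2 a b T s y + ereal e"
proof -
  have le_add: "z \<le> z + ereal e" for z :: ereal
    using \<open>0 \<le> e\<close> by (simp add: ereal_le_add_self)
  have mono_add_e: "mono (\<lambda>z::ereal. z + ereal e)"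
    by (rule monoI) (rule add_right_mono)
  have "(if y = b \<and> 0 \<le> s \<and> s \<le> T then ereal (Ndown1 s) else \<infinity>)
      \<le> (if y = b \<and> 0 \<le> s \<and> s \<le> T then ereal (Ndown2 s) else \<infinity>) + ereal e"
    using assms(1)[of s] by auto
  then show ?thesis
    unfolding value_cond_def min_of_mono[OF mono_add_e, symmetric] by (intro min.mono le_add)
qed

lemma lax_hopf_le_add:
  assumes "\<And>s. Ndown1 s \<le> Ndown2 s + e" "0 \<le> e"
  shows "lax_hopf f rhoj v w Nini Nup Ndown1 a b T t x \<le> lax_hopf f rhoj v w Nini Nup Ndown2 a b T t x + ereal e"
proof -
  let ?A = "{-w..v} \<times> {0::real..}"
  let ?cost = "\<lambda>Ndown p. value_cond Nini Nup Ndown a b T (t - snd p) (x - snd p * fst p)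
                           + ereal (snd p * fstar f rhoj (fst p))"
  have "(INF q\<in>?A. ?cost Ndown1 q) - ereal e \<le> ?cost Ndown2 p" if "p \<in> ?A" for p
  proof -
    have "(INF q\<in>?A. ?cost Ndown1 q) \<le> ?cost Ndown1 p" using that by (rule INF_lower)
    also have "\<dots> \<le> (value_cond Nini Nup Ndown2 a b T (t - snd p) (x - snd p * fst p) + ereal e)
                    + ereal (snd p * fstar f rhoj (fst p))"
      by (intro add_right_mono value_cond_le_add assms)
    also have "\<dots> = ?cost Ndown2 p + ereal e" by (simp add: ac_simps)
    finally show ?thesis by (simp add: ereal_minus_le)
  qed
  then have "(INF q\<in>?A. ?cost Ndown1 q) - ereal e \<le> (INF q\<in>?A. ?cost Ndown2 q)"
    by (rule INF_greatest)
  then show ?thesis unfolding lax_hopf_def by (simp add: ereal_minus_le)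
qed

lemma lax_hopf_signal_deviation:
  fixes th :: real
  assumes "0 \<le> eta" "eta \<le> 1" "0 < Delta" "0 \<le> c"
  defines "NDelta \<equiv> \<lambda>t. integral {0..t} (\<lambda>\<tau>. c * signal eta Delta th \<tau>)"
    and "N0 \<equiv> \<lambda>t. integral {0..t} (\<lambda>\<tau>. eta * c)"
  shows "lax_hopf f rhoj v w Nini Nup NDelta a b T t x \<le> lax_hopf f rhoj v w Nini Nup N0 a b T t x + ereal (c * Delta)"
    and "lax_hopf f rhoj v w Nini Nup N0 a b T t x \<le> lax_hopf f rhoj v w Nini Nup NDelta a b T t x + ereal (c * Delta)"
proof -
  have "NDelta s \<le> N0 s + c * Delta" "N0 s \<le> NDelta s + c * Delta" for s
    using integral_signal_deviation[OF assms(1-4), of s th]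
    unfolding NDelta_def N0_def abs_le_iff by linarith+
  moreover have "0 \<le> c * Delta" using assms(3,4) by simp
  ultimately show "lax_hopf f rhoj v w Nini Nup NDelta a b T t x \<le> lax_hopf f rhoj v w Nini Nup N0 a b T t x + ereal (c * Delta)"
    and "lax_hopf f rhoj v w Nini Nup N0 a b T t x \<le> lax_hopf f rhoj v w Nini Nup NDelta a b T t x + ereal (c * Delta)"
    by (simp_all add: lax_hopf_le_add)
qed

lemma uniform_approx_of_linear_bound:
  fixes F G :: "real \<Rightarrow> 'a \<Rightarrow> 'b \<Rightarrow> ereal"
  assumes "0 < K"
    and "\<And>Delta t x. 0 < Delta \<Longrightarrow> F Delta t x \<le> G Delta t x + ereal (K * Delta)"
    and "\<And>Delta t x. 0 < Delta \<Longrightarrow> G Delta t x \<le> F Delta t x + ereal (K * Delta)"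
  shows "\<forall>\<epsilon>>0. \<exists>\<delta>>0. \<forall>Delta. 0 < Delta \<and> Delta < \<delta> \<longrightarrow>
           (\<forall>t\<in>A. \<forall>x\<in>B. F Delta t x \<le> G Delta t x + ereal \<epsilon> \<and> G Delta t x \<le> F Delta t x + ereal \<epsilon>)"
proof (intro allI impI)
  fix \<epsilon> :: real assume "0 < \<epsilon>"
  have "ereal (K * Delta) \<le> ereal \<epsilon>" if "Delta < \<epsilon> / K" for Delta
    using that \<open>0 < K\<close> by (simp add: field_simps)
  then have "F Delta t x \<le> G Delta t x + ereal \<epsilon> \<and> G Delta t x \<le> F Delta t x + ereal \<epsilon>"
    if "0 < Delta" "Delta < \<epsilon> / K" for Delta t x
    using assms(2,3)[OF \<open>0 < Delta\<close>, of t x] that by (meson add_left_mono order_trans)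
  moreover have "0 < \<epsilon> / K" using \<open>0 < \<epsilon>\<close> \<open>0 < K\<close> by simp
  ultimately show "\<exists>\<delta>>0. \<forall>Delta. 0 < Delta \<and> Delta < \<delta> \<longrightarrow>
           (\<forall>t\<in>A. \<forall>x\<in>B. F Delta t x \<le> G Delta t x + ereal \<epsilon> \<and> G Delta t x \<le> F Delta t x + ereal \<epsilon>)"
    by blast
qed

theorem theorem4p1:
  fixes f :: "real \<Rightarrow> real" and rhoj v w C1 C3 eta a1 b1 T :: real
    and Nini Nup S3 :: "real \<Rightarrow> real" and theta :: "real \<Rightarrow> real"
  assumes F: "assumption_F f rhoj C1 v w"
    and C1: "C1 > 0" and C3: "C3 > 0"
    and link: "a1 < b1" and T: "T > 0"
    and eta: "0 < eta" "eta < 1"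
    and nospill: "\<forall>t. S3 t = C3"
  shows "\<forall>\<epsilon>>0. \<exists>\<delta>>0. \<forall>Delta. 0 < Delta \<and> Delta < \<delta> \<longrightarrow>
           (\<forall>t\<in>{0..T}. \<forall>x\<in>{a1..b1}.
              let NDelta = lax_hopf f rhoj v w Nini Nup
                    (\<lambda>t. integral {0..t} (\<lambda>\<tau>. min C1 (S3 \<tau>) * signal eta Delta (theta Delta) \<tau>))
                    a1 b1 T t x;
                  N0 = lax_hopf f rhoj v w Nini Nup
                    (\<lambda>t. integral {0..t} (\<lambda>\<tau>. eta * min C1 (S3 \<tau>)))
                    a1 b1 T t x
              in NDelta \<le> N0 + ereal \<epsilon> \<and> N0 \<le> NDelta + ereal \<epsilon>)"
proof -
  define c where "c = min C1 C3"
  have "0 < c" using C1 C3 unfolding c_def by simp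
  have effective_supply: "min C1 (S3 \<tau>) = c" for \<tau> using nospill unfolding c_def by simp
  show ?thesis
    unfolding Let_def effective_supply
    by (rule uniform_approx_of_linear_bound[OF \<open>0 < c\<close>])
       (use lax_hopf_signal_deviation \<open>0 < c\<close> eta in \<open>simp_all\<close>)
qed

end
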